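(* Let $\alpha,\mu,\beta\in(0,1]$, $\xi>0$, $\lambda>0$, $\lambda\ne1$, and let $c^{(\mu)}_k$ be the coefficients of $\Big(\frac{(1-u)^\alpha}{\lambda+(1-u)^\alpha}\Big)^\mu$. The solution of the Cauchy problem $$\frac{d^\beta}{dt^\beta}p_n(t)=-\xi(\lambda+1)^\mu\sum_{m=0}^nc^{(\mu)}_{n-m}p_m(t),\qquad p_n(0)=\delta_{n0},\quad n\in\mathbb N_0,$$ has generating function $\sum_np_n(t)u^n=E_\beta\Big(-\xi t^\beta\frac{(\lambda+1)^\mu(1-u)^{\alpha\mu}}{(\lambda+(1-u)^\alpha)^\mu}\Big)$ and is given by $$p_n(t)=\sum_{m=0}^\infty\frac{[-(\lambda+1)^\mu\xi t^\beta]^m}{\Gamma(\beta m+1)}\mathcal E^{(m\mu)}_\alpha(\lambda,n),$$ $$\mathcal E^{(m\mu)}_\alpha(\lambda,n)=\begin{cases}\displaystyle\frac1{n!}\sum_{s=0}^\infty\frac{(-\lambda)^s(m\mu)_s}{s!}(\alpha s)_n,&0<\lambda<1,\\[2mm]\displaystyle\lambda^{-m\mu}\sum_{s=0}^\infty\frac{(-\lambda^{-1})^s(m\mu)_s}{s!}(-1)^n\binom{\alpha(s+m\mu)}{n},&\lambda>1,\end{cases}$$ where the inner series converge absolutely.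
   Context: $\frac{d^\beta}{dt^\beta}$ is the Caputo derivative of order $\beta$ (ordinary derivative for $\beta=1$); $E_\beta(z)=\sum_{m\ge0}z^m/\Gamma(\beta m+1)$; $(c)_s=\Gamma(c+s)/\Gamma(c)$ is the Pochhammer symbol with $(c)_0=1$, $(0)_s=\delta_{s0}$; $\binom{c}{n}=c(c-1)\cdots(c-n+1)/n!$. *)

theory Defs
  imports "HOL-Analysis.Analysis"
begin

definition has_caputo_deriv :: "real \<Rightarrow> (real \<Rightarrow> real) \<Rightarrow> real \<Rightarrow> real \<Rightarrow> bool" where
  "has_caputo_deriv \<beta> f D t \<longleftrightarrow>
     (if \<beta> = 1 then (f has_real_derivative D) (at t)
      else continuous_on {0..t} f \<and> (\<forall>s\<in>{0<..<t}. f differentiable (at s)) \<and>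
           (\<lambda>s. (t - s) powr (-\<beta>) * deriv f s) integrable_on {0..t} \<and>
           D = integral {0..t} (\<lambda>s. (t - s) powr (-\<beta>) * deriv f s) / Gamma (1 - \<beta>))"

definition mittag_leffler :: "real \<Rightarrow> real \<Rightarrow> real" where
  "mittag_leffler \<beta> z = (\<Sum>m. z ^ m / Gamma (\<beta> * real m + 1))"

definition gfun :: "real \<Rightarrow> real \<Rightarrow> real \<Rightarrow> real \<Rightarrow> real" where
  "gfun \<alpha> \<mu> lam u = ((1 - u) powr \<alpha> / (lam + (1 - u) powr \<alpha>)) powr \<mu>"

definition ccoef :: "real \<Rightarrow> real \<Rightarrow> real \<Rightarrow> nat \<Rightarrow> real" where
  "ccoef \<alpha> \<mu> lam k = (deriv ^^ k) (gfun \<alpha> \<mu> lam) 0 / fact k"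

definition Eterm_small :: "real \<Rightarrow> real \<Rightarrow> real \<Rightarrow> nat \<Rightarrow> nat \<Rightarrow> real" where
  "Eterm_small \<alpha> a lam n s = (-lam) ^ s * pochhammer a s / fact s * pochhammer (\<alpha> * real s) n"

definition Eterm_large :: "real \<Rightarrow> real \<Rightarrow> real \<Rightarrow> nat \<Rightarrow> nat \<Rightarrow> real" where
  "Eterm_large \<alpha> a lam n s =
     (-(1 / lam)) ^ s * pochhammer a s / fact s * (-1) ^ n * ((\<alpha> * (real s + a)) gchoose n)"

definition Ecoef :: "real \<Rightarrow> real \<Rightarrow> real \<Rightarrow> nat \<Rightarrow> real" where
  "Ecoef \<alpha> a lam n =
     (if lam < 1 then (1 / fact n) * (\<Sum>s. Eterm_small \<alpha> a lam n s)
      else lam powr (-a) * (\<Sum>s. Eterm_large \<alpha> a lam n s))"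

definition pterm :: "real \<Rightarrow> real \<Rightarrow> real \<Rightarrow> real \<Rightarrow> real \<Rightarrow> nat \<Rightarrow> real \<Rightarrow> nat \<Rightarrow> real" where
  "pterm \<alpha> \<mu> \<beta> \<xi> lam n t m =
     (-((lam + 1) powr \<mu>) * \<xi> * t powr \<beta>) ^ m / Gamma (\<beta> * real m + 1) * Ecoef \<alpha> (real m * \<mu>) lam n"

definition psol :: "real \<Rightarrow> real \<Rightarrow> real \<Rightarrow> real \<Rightarrow> real \<Rightarrow> nat \<Rightarrow> real \<Rightarrow> real" where
  "psol \<alpha> \<mu> \<beta> \<xi> lam n t = (\<Sum>m. pterm \<alpha> \<mu> \<beta> \<xi> lam n t m)"

end

(*
  For a = m * mu, the coefficients Ecoef alpha a lam n are the Taylor coefficients at u = 0 of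
  gbase alpha lam u powr a, where gbase alpha lam u = (1 - u)^alpha / (lam + (1 - u)^alpha).
  Near u = 0 this follows by expanding (1 + lam / (1 - u)^alpha)^(-a) (if lam < 1), resp.
  lam^(-a) (1 - u)^(alpha a) (1 + (1 - u)^alpha / lam)^(-a) (if lam > 1), binomially and
  interchanging the absolutely convergent double series.  The function has a holomorphic
  continuation to the unit disc bounded by 1, so the expansion holds for |u| < 1 and Cauchy's
  inequality gives |Ecoef| <= 1.  Since gbase^((m+1) mu) = gbase^mu * gbase^(m mu), the
  coefficients of consecutive m are related by convolution with the coefficients c_k of gbase^mu.

  The explicit solution is p_n(t) = sum_m E_(m mu)(n) (K t^beta)^m / Gamma(beta m + 1) with
  K = -(lam + 1)^mu xi.  For bounded coefficients such a Mittag-Leffler type series may be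
  differentiated termwise in the Caputo sense, D^beta t^(beta m) being
  Gamma(beta m + 1) / Gamma(beta (m - 1) + 1) t^(beta (m - 1)), by dominated convergence against
  the integrable kernel (t - s)^(-beta) s^(beta - 1); the convolution identity turns the result
  into the right-hand side of the equation.  Summing p_n(t) u^n and interchanging the sums
  yields E_beta(K t^beta gbase^mu).
*)

theory Submission
  imports Defs "HOL-Complex_Analysis.Complex_Analysis"
begin

lemma summable_on_dominated_rows:
  fixes A B :: "nat \<Rightarrow> nat \<Rightarrow> real"
  assumes AB: "\<And>m n. \<bar>A m n\<bar> \<le> B m n"
    and Bs: "\<And>m. (\<lambda>n. B m n) sums b m" and bs: "summable b"
  shows "(\<lambda>(m,n). A m n) summable_on UNIV \<times> UNIV"
proof -
  have B0: "B m n \<ge> 0" for m n using AB[of m n] by linarith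
  have "B m 0 \<le> b m" for m
    using sum_le_suminf[of "\<lambda>n. B m n" "{0}"] Bs[of m] B0 by (auto simp: sums_iff)
  hence "b m \<ge> 0" for m using B0[of m 0] by (meson order_trans)
  hence "(b has_sum (\<Sum>m. b m)) UNIV"
    using bs by (intro sums_nonneg_imp_has_sum) (auto simp: summable_sums)
  moreover have "((\<lambda>n. B m n) has_sum b m) UNIV" for m
    using Bs[of m] B0 by (intro sums_nonneg_imp_has_sum) auto
  ultimately have sB: "(\<lambda>(m,n). B m n) summable_on UNIV \<times> UNIV"
    using summable_on_SigmaI[where A=UNIV and B="\<lambda>_. UNIV" and f="\<lambda>(m,n). B m n" and g=b] B0
    by (auto simp: summable_on_def)
  have "(\<lambda>x. norm ((\<lambda>(m,n). A m n) x)) summable_on UNIV \<times> UNIV"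
  proof (rule Infinite_Sum.abs_summable_on_comparison_test)
    show "(\<lambda>x. norm ((\<lambda>(m,n). B m n) x)) summable_on UNIV \<times> UNIV"
      using sB B0 by (simp add: case_prod_unfold)
  qed (use AB B0 in auto)
  thus ?thesis by (rule abs_summable_summable)
qed

lemma sums_swap_dominated:
  fixes A B :: "nat \<Rightarrow> nat \<Rightarrow> real"
  assumes AB: "\<And>m n. \<bar>A m n\<bar> \<le> B m n"
    and Bs: "\<And>m. (\<lambda>n. B m n) sums b m" and bs: "summable b"
    and As: "\<And>m. (\<lambda>n. A m n) sums a m"
  shows "(\<lambda>n. \<Sum>m. A m n) sums (\<Sum>m. a m)" "\<And>n. summable (\<lambda>m. \<bar>A m n\<bar>)"
proof -
  have B0: "B m n \<ge> 0" for m n using AB[of m n] by linarith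
  have Bb: "B m n \<le> b m" for m n
    using sum_le_suminf[of "\<lambda>n. B m n" "{n}"] Bs[of m] B0 by (auto simp: sums_iff)
  show colabs: "summable (\<lambda>m. \<bar>A m n\<bar>)" for n
    by (rule summable_comparison_test'[OF bs, of 0]) (auto intro: order_trans[OF AB Bb])
  have colsum: "summable (\<lambda>m. A m n)" for n
    using colabs by (rule summable_rabs_cancel)
  obtain S where S: "((\<lambda>(m,n). A m n) has_sum S) (UNIV \<times> UNIV)"
    using summable_on_dominated_rows[OF AB Bs bs] by (auto simp: summable_on_def)
  have rowA: "((\<lambda>n. A m n) has_sum a m) UNIV" for m
  proof (rule norm_summable_imp_has_sum[OF _ As])
    show "summable (\<lambda>n. norm (A m n))"
      by (rule summable_comparison_test'[of "\<lambda>n. B m n" 0]) (use Bs AB in \<open>auto simp: sums_iff\<close>)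
  qed
  have colA: "((\<lambda>m. A m n) has_sum (\<Sum>m. A m n)) UNIV" for n
  proof (rule norm_summable_imp_has_sum[OF _ summable_sums[OF colsum]])
    show "summable (\<lambda>m. norm (A m n))" using colabs[of n] by simp
  qed
  have "(a has_sum S) UNIV"
    using has_sum_Sigma'[where f="\<lambda>(m,n). A m n" and a=S and A=UNIV and B="\<lambda>_. UNIV" and b=a] S rowA
    by auto
  hence "(\<Sum>m. a m) = S" using has_sum_imp_sums sums_unique by metis
  moreover have "((\<lambda>(n,m). A m n) has_sum S) (UNIV \<times> UNIV)"
    using S has_sum_swap[where f="\<lambda>(m,n). A m n" and S=S and A=UNIV and B=UNIV]
    by (simp add: case_prod_unfold)
  hence "((\<lambda>n. \<Sum>m. A m n) has_sum S) UNIV"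
    using has_sum_Sigma'[where f="\<lambda>(n,m). A m n" and a=S and A=UNIV and B="\<lambda>_. UNIV"] colA
    by auto
  ultimately show "(\<lambda>n. \<Sum>m. A m n) sums (\<Sum>m. a m)" using has_sum_imp_sums by metis
qed

lemma powser_higher_deriv:
  fixes c :: "nat \<Rightarrow> real"
  assumes r: "r > 0" and s: "\<And>x. \<bar>x\<bar> < r \<Longrightarrow> (\<lambda>n. c n * x^n) sums f x"
  shows "(deriv ^^ k) f 0 = fact k * c k"
  using s
proof (induction k arbitrary: c f)
  case 0
  have "(\<lambda>n. c n * 0^n) sums f 0" using 0[of 0] r by simp
  moreover have "(\<lambda>n. c n * 0^n) sums c 0" using powser_sums_zero[of c] by simp
  ultimately show ?case using sums_unique2 by simp
next
  case (Suc k)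
  have "(\<lambda>n. diffs c n * x^n) sums deriv f x" if x: "\<bar>x\<bar> < r" for x
  proof -
    have sm: "\<And>z. norm z < r \<Longrightarrow> summable (\<lambda>n. c n * z ^ n)"
      using Suc.prems by (auto simp: sums_iff)
    have "((\<lambda>z. \<Sum>n. c n * z^n) has_field_derivative (\<Sum>n. diffs c n * x^n)) (at x)"
      by (rule termdiffs_strong'[of r]) (use sm x in auto)
    moreover have "\<forall>z\<in>ball 0 r. (\<Sum>n. c n * z^n) = f z"
      using Suc.prems by (auto simp: sums_iff)
    ultimately have "(f has_field_derivative (\<Sum>n. diffs c n * x^n)) (at x)"
      using has_field_derivative_transform_within_open[where S="ball 0 r" and g=f] x by simp
    hence "deriv f x = (\<Sum>n. diffs c n * x^n)" by (rule DERIV_imp_deriv)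
    moreover have "summable (\<lambda>n. diffs c n * x^n)"
      by (rule termdiff_converges[of x r]) (use sm x in auto)
    ultimately show ?thesis by (simp add: sums_iff)
  qed
  hence IH: "(deriv ^^ k) (deriv f) 0 = fact k * diffs c k" by (rule Suc.IH)
  have "(deriv ^^ Suc k) f 0 = (deriv ^^ k) (deriv f) 0"
    by (simp add: funpow_Suc_right del: funpow.simps)
  also note IH
  also have "fact k * diffs c k = fact (Suc k) * c (Suc k)" by (simp add: diffs_def)
  finally show ?case .
qed

lemma powser_coeff_unique:
  fixes c d :: "nat \<Rightarrow> real"
  assumes "r > 0" and "\<And>x. \<bar>x\<bar> < r \<Longrightarrow> (\<lambda>n. c n * x^n) sums f x"
    and "\<And>x. \<bar>x\<bar> < r \<Longrightarrow> (\<lambda>n. d n * x^n) sums f x"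
  shows "c k = d k"
  using powser_higher_deriv[OF assms(1,2), of k] powser_higher_deriv[OF assms(1,3), of k]
  by simp

lemma pochhammer_nonneg_real: "0 \<le> (c::real) \<Longrightarrow> 0 \<le> pochhammer c n"
  by (simp add: pochhammer_prod prod_nonneg)

lemma pochhammer_binomial_sums:
  fixes c u :: real
  assumes "\<bar>u\<bar> < 1"
  shows "(\<lambda>n. pochhammer c n / fact n * u^n) sums (1 - u) powr (-c)"
proof -
  have "(\<lambda>n. ((-c) gchoose n) * (-u)^n) sums (1 + (-u)) powr (-c)"
    by (rule gen_binomial_real) (use assms in auto)
  moreover have "((-c) gchoose n) * (-u)^n = pochhammer c n / fact n * u^n" for n
  proof -
    have "((-c) gchoose n) * (-u)^n = ((-1)^n * (-1)^n) * (pochhammer c n / fact n * u^n)"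
      by (simp add: gbinomial_pochhammer power_minus[of u] algebra_simps)
    also have "(-1::real)^n * (-1)^n = 1" by (simp flip: power_mult_distrib)
    finally show ?thesis by simp
  qed
  ultimately show ?thesis by simp
qed

lemma abs_gbinomial_le_pochhammer:
  fixes c :: real
  assumes "c \<ge> 0"
  shows "\<bar>c gchoose n\<bar> \<le> pochhammer c n / fact n"
proof -
  have "\<bar>c gchoose n\<bar> = (\<Prod>i = 0..<n. \<bar>c - of_nat i\<bar>) / fact n"
    by (simp add: gbinomial_prod_rev abs_prod)
  also have "(\<Prod>i = 0..<n. \<bar>c - of_nat i\<bar>) \<le> (\<Prod>i = 0..<n. c + of_nat i)"
    by (rule prod_mono) (use assms in auto)
  finally show ?thesis by (simp add: pochhammer_prod divide_right_mono)
qed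

lemma powr_mult_of_nat: "0 < (x::real) \<Longrightarrow> x powr (c * real s) = (x powr c) ^ s"
  by (simp add: powr_powr[symmetric] powr_realpow)

definition gbase :: "real \<Rightarrow> real \<Rightarrow> real \<Rightarrow> real" where
  "gbase \<alpha> lam u = (1 - u) powr \<alpha> / (lam + (1 - u) powr \<alpha>)"

lemma gbase_pos: "0 < lam \<Longrightarrow> \<bar>u\<bar> < 1 \<Longrightarrow> 0 < gbase \<alpha> lam u"
  by (auto simp: gbase_def intro!: divide_pos_pos add_pos_pos)

lemma gbase_powr_eq:
  assumes "0 < lam" "0 < W" "W = (1 - u) powr \<alpha>"
  shows "gbase \<alpha> lam u powr a = (1 + lam / W) powr (-a)"
    and "lam powr a * gbase \<alpha> lam u powr a = W powr a * (1 + W / lam) powr (-a)"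
proof -
  have "1 + lam / W = (lam + W) / W" "1 + W / lam = (lam + W) / lam"
    using assms by (simp_all add: field_simps)
  moreover have "lam powr (-a) * lam powr a = 1" using assms by (simp add: powr_add[symmetric])
  ultimately show "gbase \<alpha> lam u powr a = (1 + lam / W) powr (-a)"
    "lam powr a * gbase \<alpha> lam u powr a = W powr a * (1 + W / lam) powr (-a)"
    using assms by (simp_all add: gbase_def powr_divide powr_minus field_simps)
qed

lemma gbase_powr_eq_div:
  assumes "0 < lam" "\<bar>u\<bar> < 1"
  shows "gbase \<alpha> lam u powr \<mu> = (1 - u) powr (\<alpha> * \<mu>) / (lam + (1 - u) powr \<alpha>) powr \<mu>"
  using assms by (simp add: gbase_def powr_divide powr_powr)

lemma Eterm_small_double_sum:
  fixes \<alpha> lam a u :: real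
  assumes \<alpha>: "0 < \<alpha>" and lam: "0 < lam" and a: "0 \<le> a"
    and u: "\<bar>u\<bar> < 1" "lam < (1 - \<bar>u\<bar>) powr \<alpha>"
  shows "(\<lambda>n. \<Sum>s. Eterm_small \<alpha> a lam n s / fact n * u^n) sums gbase \<alpha> lam u powr a"
    and "\<And>n. summable (\<lambda>s. \<bar>Eterm_small \<alpha> a lam n s / fact n * u^n\<bar>)"
proof -
  define V where "V = (1 - \<bar>u\<bar>) powr \<alpha>"
  define W where "W = (1 - u) powr \<alpha>"
  have u1: "0 < 1 - \<bar>u\<bar>" "0 < 1 - u" using u by auto
  have V: "0 < V" "V \<le> W" "lam < V"
    using u u1 \<alpha> by (auto simp: V_def W_def intro: powr_mono2)
  define A where "A s n = Eterm_small \<alpha> a lam n s / fact n * u^n" for s n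
  define B where "B s n = lam^s * pochhammer a s / fact s * (pochhammer (\<alpha> * real s) n / fact n * \<bar>u\<bar>^n)" for s n
  have AB: "\<bar>A s n\<bar> \<le> B s n" for s n
    using pochhammer_nonneg_real[OF a, of s] pochhammer_nonneg_real[of "\<alpha> * real s" n] \<alpha> lam
    by (simp add: A_def B_def Eterm_small_def abs_mult power_abs)
  have Bs: "(\<lambda>n. B s n) sums (pochhammer a s / fact s * (lam / V)^s)" for s
  proof -
    have "(\<lambda>n. pochhammer (\<alpha> * real s) n / fact n * \<bar>u\<bar>^n) sums (1 - \<bar>u\<bar>) powr (-\<alpha> * real s)"
      using pochhammer_binomial_sums[of "\<bar>u\<bar>"] u by simp
    hence "(\<lambda>n. B s n) sums (lam^s * pochhammer a s / fact s * (1 - \<bar>u\<bar>) powr (-\<alpha> * real s))"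
      unfolding B_def by (rule sums_mult)
    thus ?thesis using u1 powr_mult_of_nat[of "1 - \<bar>u\<bar>" "-\<alpha>" s]
      by (simp add: V_def powr_minus_divide power_mult_distrib power_divide mult_ac)
  qed
  have bs: "summable (\<lambda>s. pochhammer a s / fact s * (lam / V)^s)"
    using pochhammer_binomial_sums[of "lam / V" a] lam V by (auto simp: sums_iff)
  have As: "(\<lambda>n. A s n) sums (pochhammer a s / fact s * (-(lam / W))^s)" for s
  proof -
    have "(\<lambda>n. pochhammer (\<alpha> * real s) n / fact n * u^n) sums (1 - u) powr (-\<alpha> * real s)"
      using pochhammer_binomial_sums[of u] u by simp
    hence "(\<lambda>n. (-lam)^s * pochhammer a s / fact s * (pochhammer (\<alpha> * real s) n / fact n * u^n))
       sums ((-lam)^s * pochhammer a s / fact s * (1 - u) powr (-\<alpha> * real s))"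
      by (rule sums_mult)
    moreover have "(-(lam / W))^s = (-1)^s * lam^s / W^s"
      by (simp add: power_minus[of "lam / W"] power_divide)
    ultimately show ?thesis using u1 powr_mult_of_nat[of "1 - u" "-\<alpha>" s]
      by (simp add: A_def Eterm_small_def W_def powr_minus_divide power_mult_distrib
          power_divide power_minus[of "lam"] mult_ac)
  qed
  have "(\<lambda>s. pochhammer a s / fact s * (-(lam / W))^s) sums gbase \<alpha> lam u powr a"
    using pochhammer_binomial_sums[of "-(lam / W)" a] gbase_powr_eq(1)[OF lam _ W_def] lam V
    by simp
  with sums_swap_dominated[OF AB Bs bs As]
  show "(\<lambda>n. \<Sum>s. Eterm_small \<alpha> a lam n s / fact n * u^n) sums gbase \<alpha> lam u powr a"
    "\<And>n. summable (\<lambda>s. \<bar>Eterm_small \<alpha> a lam n s / fact n * u^n\<bar>)"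
    unfolding A_def by (auto simp: sums_iff)
qed

lemma powr_mult_of_nat_add:
  "0 < (x::real) \<Longrightarrow> x powr (c * (real s + a)) = (x powr c) ^ s * x powr (c * a)"
  by (simp add: distrib_left powr_add powr_mult_of_nat)

lemma powr_one_minus_le_inverse:
  fixes \<alpha> u :: real
  assumes "0 \<le> \<alpha>" "\<bar>u\<bar> < 1"
  shows "(1 - u) powr \<alpha> \<le> 1 / (1 - \<bar>u\<bar>) powr \<alpha>"
proof -
  have "(1 - u) powr \<alpha> \<le> (1 + \<bar>u\<bar>) powr \<alpha>" using assms by (intro powr_mono2) auto
  also have "\<dots> \<le> (1 / (1 - \<bar>u\<bar>)) powr \<alpha>"
  proof (intro powr_mono2)
    have "(1 + \<bar>u\<bar>) * (1 - \<bar>u\<bar>) \<le> 1" by (simp add: algebra_simps)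
    thus "1 + \<bar>u\<bar> \<le> 1 / (1 - \<bar>u\<bar>)" using assms by (simp add: field_simps)
  qed (use assms in auto)
  finally show ?thesis using assms by (simp add: powr_divide)
qed

lemma Eterm_large_row_sums:
  assumes "\<bar>u\<bar> < 1"
  shows "(\<lambda>n. Eterm_large \<alpha> a lam n s * u^n) sums
           ((-(1 / lam))^s * pochhammer a s / fact s * (1 - u) powr (\<alpha> * (real s + a)))"
proof -
  have "(\<lambda>n. ((\<alpha> * (real s + a)) gchoose n) * (-u)^n) sums (1 + (-u)) powr (\<alpha> * (real s + a))"
    by (rule gen_binomial_real) (use assms in auto)
  hence "(\<lambda>n. (-(1 / lam))^s * pochhammer a s / fact s * (((\<alpha> * (real s + a)) gchoose n) * (-u)^n))
     sums ((-(1 / lam))^s * pochhammer a s / fact s * (1 + (-u)) powr (\<alpha> * (real s + a)))"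
    by (rule sums_mult)
  thus ?thesis unfolding Eterm_large_def power_minus[of u] by (simp add: mult_ac)
qed

lemma Eterm_large_double_sum:
  fixes \<alpha> lam a u :: real
  assumes \<alpha>: "0 < \<alpha>" and lam: "0 < lam" and a: "0 \<le> a"
    and u: "\<bar>u\<bar> < 1" "1 < lam * (1 - \<bar>u\<bar>) powr \<alpha>"
  shows "(\<lambda>n. \<Sum>s. Eterm_large \<alpha> a lam n s * u^n) sums (lam powr a * gbase \<alpha> lam u powr a)"
    and "\<And>n. summable (\<lambda>s. \<bar>Eterm_large \<alpha> a lam n s * u^n\<bar>)"
proof -
  define V where "V = (1 - \<bar>u\<bar>) powr \<alpha>"
  define W where "W = (1 - u) powr \<alpha>"
  have u1: "0 < 1 - \<bar>u\<bar>" "0 < 1 - u" using u by auto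
  have V: "0 < V" "1 < lam * V" using u u1 by (auto simp: V_def)
  have "W \<le> 1 / V" using powr_one_minus_le_inverse[of \<alpha> u] \<alpha> u by (simp add: W_def V_def)
  also have "1 / V < lam" using V by (simp add: field_simps)
  finally have W: "0 < W" "W < lam" using u1 by (auto simp: W_def)
  define A where "A s n = Eterm_large \<alpha> a lam n s * u^n" for s n
  define B where "B s n = (1 / lam)^s * pochhammer a s / fact s *
      (pochhammer (\<alpha> * (real s + a)) n / fact n * \<bar>u\<bar>^n)" for s n
  have AB: "\<bar>A s n\<bar> \<le> B s n" for s n
  proof -
    have "\<bar>A s n\<bar> = (1 / lam)^s * pochhammer a s / fact s * (\<bar>(\<alpha> * (real s + a)) gchoose n\<bar> * \<bar>u\<bar>^n)"
      using pochhammer_nonneg_real[OF a, of s] lam by (simp add: A_def Eterm_large_def abs_mult power_abs)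
    also have "\<dots> \<le> B s n" unfolding B_def
      using abs_gbinomial_le_pochhammer[of "\<alpha> * (real s + a)" n] pochhammer_nonneg_real[OF a, of s] lam \<alpha> a
      by (intro mult_left_mono mult_right_mono) auto
    finally show ?thesis .
  qed
  have Bs: "(\<lambda>n. B s n) sums (V powr (-a) * (pochhammer a s / fact s * (1 / (lam * V))^s))" for s
  proof -
    have "(\<lambda>n. B s n) sums ((1 / lam)^s * pochhammer a s / fact s * (1 - \<bar>u\<bar>) powr (-\<alpha> * (real s + a)))"
      unfolding B_def using pochhammer_binomial_sums[of "\<bar>u\<bar>"] u by (intro sums_mult) simp
    moreover have "(1 - \<bar>u\<bar>) powr (-\<alpha> * (real s + a)) = (1 / V)^s * V powr (-a)"
      using u1 by (simp add: powr_mult_of_nat_add V_def powr_minus_divide powr_powr power_one_over)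
    ultimately show ?thesis by (simp add: power_mult_distrib power_divide mult_ac)
  qed
  have bs: "summable (\<lambda>s. V powr (-a) * (pochhammer a s / fact s * (1 / (lam * V))^s))"
    using pochhammer_binomial_sums[of "1 / (lam * V)" a] V by (intro summable_mult) (auto simp: sums_iff)
  have As: "(\<lambda>n. A s n) sums (W powr a * (pochhammer a s / fact s * (-(W / lam))^s))" for s
  proof -
    have "(1 - u) powr (\<alpha> * (real s + a)) = W^s * W powr a"
      using u1 by (simp add: powr_mult_of_nat_add W_def powr_powr)
    moreover have "(-(W / lam))^s = (-(1 / lam))^s * W^s"
      by (simp add: power_minus[of "W / lam"] power_minus[of "1 / lam"] power_divide)
    ultimately show ?thesis using Eterm_large_row_sums[OF u(1), of \<alpha> a lam s]
      by (simp add: A_def mult_ac)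
  qed
  have "(\<lambda>s. W powr a * (pochhammer a s / fact s * (-(W / lam))^s)) sums (lam powr a * gbase \<alpha> lam u powr a)"
    unfolding gbase_powr_eq(2)[OF lam W(1) W_def]
    using pochhammer_binomial_sums[of "-(W / lam)" a] W lam by (intro sums_mult) simp
  with sums_swap_dominated[OF AB Bs bs As]
  show "(\<lambda>n. \<Sum>s. Eterm_large \<alpha> a lam n s * u^n) sums (lam powr a * gbase \<alpha> lam u powr a)"
    "\<And>n. summable (\<lambda>s. \<bar>Eterm_large \<alpha> a lam n s * u^n\<bar>)"
    unfolding A_def by (auto simp: sums_iff)
qed

lemma eventually_lt_powr_one_minus_abs:
  fixes c \<alpha> :: real
  assumes "c < 1"
  shows "\<forall>\<^sub>F u in nhds 0. \<bar>u\<bar> < 1 \<and> c < (1 - \<bar>u\<bar>) powr \<alpha>"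
proof -
  have "((\<lambda>u::real. \<bar>u\<bar>) \<longlongrightarrow> 0) (at 0)" "((\<lambda>u::real. (1 - \<bar>u\<bar>) powr \<alpha>) \<longlongrightarrow> 1) (at 0)"
    by (auto intro!: tendsto_eq_intros)
  from order_tendstoD(2)[OF this(1) zero_less_one] order_tendstoD(1)[OF this(2) assms]
  have "\<forall>\<^sub>F u in at 0. \<bar>u\<bar> < 1 \<and> c < (1 - \<bar>u\<bar>) powr \<alpha>"
    by (rule eventually_conj)
  thus ?thesis using assms by (simp add: eventually_nhds_conv_at)
qed

lemma eventually_nhds_zero_nonzero_witness:
  fixes P :: "real \<Rightarrow> bool"
  assumes "\<forall>\<^sub>F u in nhds 0. P u"
  obtains u where "u \<noteq> 0" "P u"
proof -
  have "\<forall>\<^sub>F u in at 0. P u" using assms by (simp add: eventually_nhds_conv_at)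
  hence "\<forall>\<^sub>F u in at 0. u \<noteq> 0 \<and> P u"
    by (rule eventually_conj[OF eventually_neq_at_within])
  then obtain u where "u \<noteq> 0 \<and> P u" using eventually_happens'[OF at_neq_bot] by blast
  thus ?thesis using that by blast
qed

lemma Eterm_small_abs_summable:
  assumes "0 < \<alpha>" "0 < lam" "lam < 1" "0 \<le> a"
  shows "summable (\<lambda>s. \<bar>Eterm_small \<alpha> a lam n s\<bar>)"
proof -
  obtain u where u: "u \<noteq> 0" "\<bar>u\<bar> < 1" "lam < (1 - \<bar>u\<bar>) powr \<alpha>"
    using eventually_lt_powr_one_minus_abs[OF \<open>lam < 1\<close>, of \<alpha>]
    by (rule eventually_nhds_zero_nonzero_witness) blast
  have "summable (\<lambda>s. \<bar>u\<bar>^n / fact n * \<bar>Eterm_small \<alpha> a lam n s\<bar>)"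
    using Eterm_small_double_sum(2)[OF assms(1,2,4) u(2,3), of n] by (simp add: abs_mult power_abs mult_ac)
  thus ?thesis using u by simp
qed

lemma Eterm_large_abs_summable:
  assumes "0 < \<alpha>" "1 < lam" "0 \<le> a"
  shows "summable (\<lambda>s. \<bar>Eterm_large \<alpha> a lam n s\<bar>)"
proof -
  have lam: "0 < lam" "1 / lam < 1" using assms by auto
  obtain u where u: "u \<noteq> 0" "\<bar>u\<bar> < 1" "1 / lam < (1 - \<bar>u\<bar>) powr \<alpha>"
    using eventually_lt_powr_one_minus_abs[OF lam(2), of \<alpha>]
    by (rule eventually_nhds_zero_nonzero_witness) blast
  have "1 < lam * (1 - \<bar>u\<bar>) powr \<alpha>" using u lam by (simp add: field_simps)
  from Eterm_large_double_sum(2)[OF assms(1) lam(1) assms(3) u(2) this, of n]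
  have "summable (\<lambda>s. \<bar>u\<bar>^n * \<bar>Eterm_large \<alpha> a lam n s\<bar>)"
    by (simp add: abs_mult power_abs mult_ac)
  thus ?thesis using u by simp
qed

lemma Ecoef_sums_near_0:
  assumes "0 < \<alpha>" "0 < lam" "lam \<noteq> 1" "0 \<le> a"
  shows "\<forall>\<^sub>F u in nhds 0. (\<lambda>n. Ecoef \<alpha> a lam n * u^n) sums gbase \<alpha> lam u powr a"
proof (cases "lam < 1")
  case True
  show ?thesis using eventually_lt_powr_one_minus_abs[OF True, of \<alpha>]
  proof (rule eventually_mono, elim conjE)
    fix u assume u: "\<bar>u\<bar> < 1" "lam < (1 - \<bar>u\<bar>) powr \<alpha>"
    have "(\<Sum>s. Eterm_small \<alpha> a lam n s / fact n * u^n) = Ecoef \<alpha> a lam n * u^n" for n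
    proof -
      have "summable (Eterm_small \<alpha> a lam n)"
        using Eterm_small_abs_summable[OF assms(1,2) True assms(4)] by (rule summable_rabs_cancel)
      hence "(\<Sum>s. Eterm_small \<alpha> a lam n s / fact n * u^n) = (\<Sum>s. Eterm_small \<alpha> a lam n s) / fact n * u^n"
        by (subst suminf_mult2[symmetric]) (auto intro!: summable_divide simp: suminf_divide[symmetric])
      thus ?thesis using True by (simp add: Ecoef_def)
    qed
    thus "(\<lambda>n. Ecoef \<alpha> a lam n * u^n) sums gbase \<alpha> lam u powr a"
      using Eterm_small_double_sum(1)[OF assms(1,2,4) u] by simp
  qed
next
  case False
  hence lam: "1 < lam" "1 / lam < 1" using assms by auto
  show ?thesis using eventually_lt_powr_one_minus_abs[OF lam(2), of \<alpha>]
  proof (rule eventually_mono, elim conjE)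
    fix u assume u: "\<bar>u\<bar> < 1" "1 / lam < (1 - \<bar>u\<bar>) powr \<alpha>"
    hence "1 < lam * (1 - \<bar>u\<bar>) powr \<alpha>" using lam by (simp add: field_simps)
    note double = Eterm_large_double_sum[OF assms(1,2,4) u(1) this]
    have E: "lam powr (-a) * (\<Sum>s. Eterm_large \<alpha> a lam n s * u^n) = Ecoef \<alpha> a lam n * u^n" for n
    proof -
      have "summable (Eterm_large \<alpha> a lam n)"
        using Eterm_large_abs_summable[OF assms(1) lam(1) assms(4)] by (rule summable_rabs_cancel)
      thus ?thesis using False by (simp add: Ecoef_def suminf_mult2)
    qed
    have G: "lam powr (-a) * (lam powr a * gbase \<alpha> lam u powr a) = gbase \<alpha> lam u powr a"
      using assms by (simp add: mult.assoc[symmetric] powr_add[symmetric])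
    show "(\<lambda>n. Ecoef \<alpha> a lam n * u^n) sums gbase \<alpha> lam u powr a"
      using sums_mult[OF double(1), of "lam powr (-a)"] unfolding E G .
  qed
qed

definition one_minus_cpowr :: "real \<Rightarrow> complex \<Rightarrow> complex" where
  "one_minus_cpowr \<alpha> z = exp (of_real \<alpha> * Ln (1 - z))"

text \<open>The holomorphic continuation of \<open>\<lambda>u. gbase \<alpha> lam u powr a\<close> to the unit disc.\<close>
definition gbase_cpowr :: "real \<Rightarrow> real \<Rightarrow> real \<Rightarrow> complex \<Rightarrow> complex" where
  "gbase_cpowr \<alpha> lam a z =
     exp (of_real a * (of_real \<alpha> * Ln (1 - z) - Ln (of_real lam + one_minus_cpowr \<alpha> z)))"

lemma Re_one_minus_pos: "norm (z::complex) < 1 \<Longrightarrow> 0 < Re (1 - z)"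
  using abs_Re_le_cmod[of z] by auto

lemma Re_pos_not_nonpos_Reals: "0 < Re w \<Longrightarrow> w \<notin> \<real>\<^sub>\<le>\<^sub>0"
  by (auto simp: nonpos_Reals_def)

lemma Re_one_minus_cpowr_pos:
  assumes "0 < \<alpha>" "\<alpha> \<le> 1" "norm z < 1"
  shows "0 < Re (one_minus_cpowr \<alpha> z)"
proof -
  have "\<bar>Im (Ln (1 - z))\<bar> < pi / 2" using Re_Ln_pos_lt_imp Re_one_minus_pos[OF assms(3)] by blast
  hence "\<bar>\<alpha> * Im (Ln (1 - z))\<bar> < pi / 2"
    using assms mult_left_le_one_le[of "\<bar>Im (Ln (1 - z))\<bar>" \<alpha>] by (simp add: abs_mult)
  hence "cos (\<alpha> * Im (Ln (1 - z))) > 0" by (intro cos_gt_zero_pi) auto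
  thus ?thesis by (simp add: one_minus_cpowr_def Re_exp)
qed

lemma gbase_cpowr_holomorphic:
  assumes "0 < \<alpha>" "\<alpha> \<le> 1" "0 < lam"
  shows "gbase_cpowr \<alpha> lam a holomorphic_on ball 0 1"
proof -
  have n1: "1 - z \<notin> \<real>\<^sub>\<le>\<^sub>0" if "z \<in> ball 0 1" for z :: complex
    using Re_one_minus_pos[of z] that Re_pos_not_nonpos_Reals by auto
  have n2: "of_real lam + one_minus_cpowr \<alpha> z \<notin> \<real>\<^sub>\<le>\<^sub>0" if "z \<in> ball 0 1" for z :: complex
    using Re_one_minus_cpowr_pos[of \<alpha> z] assms that by (intro Re_pos_not_nonpos_Reals) auto
  have "one_minus_cpowr \<alpha> holomorphic_on ball 0 1"
    unfolding one_minus_cpowr_def[abs_def] using n1 by (intro holomorphic_intros) auto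
  thus ?thesis
    unfolding gbase_cpowr_def[abs_def] using n1 n2 by (intro holomorphic_intros) auto
qed

lemma norm_gbase_cpowr_le_1:
  assumes "0 < \<alpha>" "\<alpha> \<le> 1" "0 < lam" "0 \<le> a" "norm z < 1"
  shows "norm (gbase_cpowr \<alpha> lam a z) \<le> 1"
proof -
  define W where "W = one_minus_cpowr \<alpha> z"
  have W: "0 < Re W" using Re_one_minus_cpowr_pos assms W_def by blast
  have "norm W \<le> norm (of_real lam + W)"
  proof -
    have "(norm W)^2 \<le> (norm (of_real lam + W))^2"
      using W assms by (simp add: cmod_power2 power_mono)
    thus ?thesis by (rule power2_le_imp_le) simp
  qed
  moreover have "0 < norm W" "of_real lam + W \<noteq> 0" using W assms by (auto simp: complex_eq_iff)
  moreover have "Re (of_real \<alpha> * Ln (1 - z)) = ln (norm W)"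
    by (simp add: W_def one_minus_cpowr_def)
  ultimately have "Re (of_real \<alpha> * Ln (1 - z) - Ln (of_real lam + W)) \<le> 0"
    by (simp add: Re_Ln)
  hence "a * Re (of_real \<alpha> * Ln (1 - z) - Ln (of_real lam + W)) \<le> 0"
    using assms by (simp add: mult_nonneg_nonpos)
  thus ?thesis by (simp add: gbase_cpowr_def W_def[symmetric])
qed

lemma gbase_cpowr_of_real:
  assumes "0 < lam" "\<bar>u\<bar> < 1"
  shows "gbase_cpowr \<alpha> lam a (of_real u) = of_real (gbase \<alpha> lam u powr a)"
proof -
  have u: "1 - u > 0" using assms by auto
  define W where "W = (1 - u) powr \<alpha>"
  have W: "W > 0" using u by (simp add: W_def)
  have "Ln (1 - of_real u) = of_real (ln (1 - u))" using Ln_of_real[OF u] by simp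
  hence L1: "of_real \<alpha> * Ln (1 - of_real u) = of_real (ln W)"
    using u by (simp add: W_def ln_powr)
  hence "one_minus_cpowr \<alpha> (of_real u) = of_real W" using W by (simp add: one_minus_cpowr_def exp_of_real)
  hence "Ln (of_real lam + one_minus_cpowr \<alpha> (of_real u)) = of_real (ln (lam + W))"
    using Ln_of_real[of "lam + W"] W assms by simp
  hence "gbase_cpowr \<alpha> lam a (of_real u) = exp (of_real (a * (ln W - ln (lam + W))))"
    by (simp add: gbase_cpowr_def L1)
  also have "\<dots> = of_real (exp (a * (ln W - ln (lam + W))))" by (rule exp_of_real)
  also have "ln W - ln (lam + W) = ln (gbase \<alpha> lam u)"
    using W assms by (simp add: gbase_def W_def[symmetric] ln_div)
  finally show ?thesis using gbase_pos[OF assms, of \<alpha>] by (simp add: powr_def)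
qed

lemma Ecoef_eq_Taylor_coeff:
  assumes \<alpha>: "0 < \<alpha>" "\<alpha> \<le> 1" and lam: "0 < lam" "lam \<noteq> 1" and a: "0 \<le> a"
  shows "of_real (Ecoef \<alpha> a lam n) = (deriv ^^ n) (gbase_cpowr \<alpha> lam a) 0 / fact n"
proof -
  define d where "d n = (deriv ^^ n) (gbase_cpowr \<alpha> lam a) 0 / fact n" for n
  have "(\<lambda>n. d n * of_real u ^ n) sums of_real (gbase \<alpha> lam u powr a)" if u: "\<bar>u\<bar> < 1" for u
    using holomorphic_power_series[OF gbase_cpowr_holomorphic[OF \<alpha> lam(1)], of "of_real u"] u
    by (simp add: d_def gbase_cpowr_of_real[OF lam(1) u])
  hence Re_sums: "(\<lambda>n. Re (d n) * u ^ n) sums (gbase \<alpha> lam u powr a)"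
    and Im_sums: "(\<lambda>n. Im (d n) * u ^ n) sums 0" if "\<bar>u\<bar> < 1" for u
    using sums_Re sums_Im that by (fastforce simp flip: of_real_power)+
  obtain r where r: "0 < r" "\<And>u. \<bar>u\<bar> < r \<Longrightarrow> (\<lambda>n. Ecoef \<alpha> a lam n * u^n) sums gbase \<alpha> lam u powr a"
    using Ecoef_sums_near_0[OF \<alpha>(1) lam a] by (auto simp: eventually_nhds_metric dist_real_def)
  have "Re (d n) = Ecoef \<alpha> a lam n"
    by (rule powser_coeff_unique[of "min r 1"]) (use r Re_sums in auto)
  moreover have "Im (d n) = 0"
    using powser_coeff_unique[of 1 "\<lambda>n. Im (d n)" "\<lambda>_. 0" "\<lambda>_. 0" n] Im_sums by auto
  ultimately show ?thesis by (simp add: d_def[symmetric] complex_eq_iff)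
qed

lemma Ecoef_sums:
  assumes "0 < \<alpha>" "\<alpha> \<le> 1" "0 < lam" "lam \<noteq> 1" "0 \<le> a" "\<bar>u\<bar> < 1"
  shows "(\<lambda>n. Ecoef \<alpha> a lam n * u^n) sums gbase \<alpha> lam u powr a"
proof -
  have "(\<lambda>n. of_real (Ecoef \<alpha> a lam n * u^n)) sums (of_real (gbase \<alpha> lam u powr a) :: complex)"
    using holomorphic_power_series[OF gbase_cpowr_holomorphic[OF assms(1-3)], of "of_real u"] assms
    by (simp add: Ecoef_eq_Taylor_coeff gbase_cpowr_of_real)
  thus ?thesis by (simp only: sums_of_real_iff)
qed

text \<open>Cauchy's inequality on circles of radius \<open>r \<rightarrow> 1\<close>, using that the continuation is bounded by 1.\<close>
lemma abs_Ecoef_le_1: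
  assumes \<alpha>: "0 < \<alpha>" "\<alpha> \<le> 1" and lam: "0 < lam" "lam \<noteq> 1" and a: "0 \<le> a"
  shows "\<bar>Ecoef \<alpha> a lam n\<bar> \<le> 1"
proof -
  have holo: "gbase_cpowr \<alpha> lam a holomorphic_on ball 0 1"
    by (rule gbase_cpowr_holomorphic[OF \<alpha> lam(1)])
  have bound: "\<bar>Ecoef \<alpha> a lam n\<bar> \<le> 1 / r^n" if r: "0 < r" "r < 1" for r
  proof -
    have "norm ((deriv ^^ n) (gbase_cpowr \<alpha> lam a) 0) \<le> fact n * 1 / r^n"
    proof (rule Cauchy_inequality)
      show "gbase_cpowr \<alpha> lam a holomorphic_on ball 0 r"
        using r by (intro holomorphic_on_subset[OF holo]) auto
      show "continuous_on (cball 0 r) (gbase_cpowr \<alpha> lam a)"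
        using r by (intro continuous_on_subset[OF holomorphic_on_imp_continuous_on[OF holo]]) auto
      show "norm (gbase_cpowr \<alpha> lam a x) \<le> 1" if "norm (0 - x) = r" for x
        using norm_gbase_cpowr_le_1[OF \<alpha> lam(1) a, of x] that r by simp
    qed (use r in auto)
    moreover have "norm ((deriv ^^ n) (gbase_cpowr \<alpha> lam a) 0) = fact n * \<bar>Ecoef \<alpha> a lam n\<bar>"
      using arg_cong[OF Ecoef_eq_Taylor_coeff[OF \<alpha> lam a, of n], of norm]
      by (simp add: norm_divide field_simps)
    ultimately have "fact n * \<bar>Ecoef \<alpha> a lam n\<bar> \<le> fact n * (1 / r^n)" by simp
    thus ?thesis by (rule mult_left_le_imp_le) simp
  qed
  show ?thesis
  proof (rule tendsto_le[of "at_left (1::real)" "\<lambda>r. 1 / r^n" 1])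
    show "((\<lambda>r. 1 / r ^ n) \<longlongrightarrow> 1) (at_left (1::real))"
      by (rule tendsto_eq_intros refl)+ auto
    show "\<forall>\<^sub>F r in at_left 1. \<bar>Ecoef \<alpha> a lam n\<bar> \<le> 1 / r ^ n"
      using eventually_at_left_real[of 0 1] by (auto elim!: eventually_mono intro: bound)
  qed auto
qed

locale Ecoef_params =
  fixes \<alpha> \<mu> lam :: real
  assumes \<alpha>: "0 < \<alpha>" "\<alpha> \<le> 1" and \<mu>: "0 < \<mu>" and lam: "0 < lam" "lam \<noteq> 1"
begin

abbreviation E :: "nat \<Rightarrow> nat \<Rightarrow> real" where
  "E m n \<equiv> Ecoef \<alpha> (real m * \<mu>) lam n"

lemma E_sums: "\<bar>u\<bar> < 1 \<Longrightarrow> (\<lambda>n. E m n * u^n) sums gbase \<alpha> lam u powr (real m * \<mu>)"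
  using Ecoef_sums[OF \<alpha> lam] \<mu> by simp

lemma abs_E_le_1: "\<bar>E m n\<bar> \<le> 1"
  using abs_Ecoef_le_1[OF \<alpha> lam] \<mu> by simp

lemma Eterm_abs_summable:
  "if lam < 1 then summable (\<lambda>s. \<bar>Eterm_small \<alpha> (real m * \<mu>) lam n s\<bar>)
   else summable (\<lambda>s. \<bar>Eterm_large \<alpha> (real m * \<mu>) lam n s\<bar>)"
  using Eterm_small_abs_summable[OF \<alpha>(1) lam(1)] Eterm_large_abs_summable[OF \<alpha>(1)] \<mu> lam
  by auto

lemma summable_norm_E_powser: "\<bar>u\<bar> < 1 \<Longrightarrow> summable (\<lambda>n. norm (E m n * u^n))"
  by (rule summable_comparison_test'[where g="\<lambda>n. \<bar>u\<bar>^n" and N=0])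
     (use abs_E_le_1 in \<open>auto simp: abs_mult power_abs mult_left_le_one_le\<close>)

lemma E_0: "E 0 n = (if n = 0 then 1 else 0)"
proof (rule powser_coeff_unique[OF zero_less_one,
      where c="E 0" and d="\<lambda>n. if n = 0 then 1 else 0" and f="\<lambda>_. 1"])
  show "(\<lambda>n. E 0 n * u^n) sums 1" if "\<bar>u\<bar> < 1" for u
    using E_sums[OF that, of 0] gbase_pos[OF lam(1) that, of \<alpha>] by simp
  show "(\<lambda>n. (if n = 0 then 1 else 0) * u^n) sums 1" if "\<bar>u\<bar> < 1" for u :: real
  proof -
    have "(\<lambda>n. (if n = 0 then 1 else 0) * u^n) = (\<lambda>n. if n = 0 then 1 else 0)" by auto
    thus ?thesis using sums_single[of 0 "\<lambda>_. 1::real"] by simp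
  qed
qed

lemma ccoef_eq_E_1: "ccoef \<alpha> \<mu> lam k = E 1 k"
  using powser_higher_deriv[OF zero_less_one, of "E 1" "gfun \<alpha> \<mu> lam" k] E_sums[of _ 1]
  by (simp add: ccoef_def gfun_def gbase_def)

text \<open>The generating function of \<open>E (m + 1)\<close> is the product of those of \<open>E 1\<close> and \<open>E m\<close>.\<close>
lemma E_Suc: "E (Suc m) n = (\<Sum>j\<le>n. ccoef \<alpha> \<mu> lam (n - j) * E m j)"
proof -
  have conv: "(\<lambda>k. (\<Sum>i\<le>k. E 1 i * E m (k - i)) * u^k) sums gbase \<alpha> lam u powr (real (Suc m) * \<mu>)"
    if u: "\<bar>u\<bar> < 1" for u
  proof -
    have "(\<lambda>k. \<Sum>i\<le>k. (E 1 i * u^i) * (E m (k - i) * u^(k - i))) sums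
        ((\<Sum>k. E 1 k * u^k) * (\<Sum>k. E m k * u^k))"
      by (rule Cauchy_product_sums)
         (use summable_norm_E_powser[OF u, of 1] summable_norm_E_powser[OF u, of m] in simp_all)
    also have "(\<Sum>k. E 1 k * u^k) = gbase \<alpha> lam u powr \<mu>"
      using E_sums[OF u, of 1] by (simp add: sums_iff)
    also have "(\<Sum>k. E m k * u^k) = gbase \<alpha> lam u powr (real m * \<mu>)"
      using E_sums[OF u, of m] by (simp add: sums_iff)
    also have "gbase \<alpha> lam u powr \<mu> * gbase \<alpha> lam u powr (real m * \<mu>)
        = gbase \<alpha> lam u powr (real (Suc m) * \<mu>)"
      using gbase_pos[OF lam(1) u] by (simp add: powr_add[symmetric] algebra_simps)
    also have "(\<lambda>k. \<Sum>i\<le>k. (E 1 i * u^i) * (E m (k - i) * u^(k - i)))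
        = (\<lambda>k. (\<Sum>i\<le>k. E 1 i * E m (k - i)) * u^k)"
      unfolding sum_distrib_right
    proof (intro ext sum.cong refl)
      fix k i :: nat assume "i \<in> {..k}"
      hence "u^i * u^(k - i) = u^k" by (simp flip: power_add)
      thus "(E 1 i * u^i) * (E m (k - i) * u^(k - i)) = E 1 i * E m (k - i) * u^k"
        by (metis mult.assoc mult.left_commute)
    qed
    finally show ?thesis .
  qed
  have "E (Suc m) n = (\<Sum>i\<le>n. E 1 i * E m (n - i))"
    by (rule powser_coeff_unique[OF zero_less_one E_sums conv])
  also have "\<dots> = (\<Sum>j\<le>n. E 1 (n - j) * E m j)"
    by (rule sum.reindex_bij_witness[where i="\<lambda>i. n - i" and j="\<lambda>i. n - i"]) auto
  finally show ?thesis by (simp add: ccoef_eq_E_1)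
qed

end

lemma has_integral_beta_kernel:
  fixes t \<gamma> \<beta> :: real
  assumes t: "0 < t" and \<gamma>: "0 < \<gamma>" and \<beta>: "0 < \<beta>" "\<beta> < 1"
  shows "((\<lambda>s. (t - s) powr (-\<beta>) * s powr (\<gamma> - 1)) has_integral t powr (\<gamma> - \<beta>) * Beta \<gamma> (1 - \<beta>)) {0..t}"
proof -
  define G where "G v = v powr (\<gamma> - 1) * (1 - v) powr ((1 - \<beta>) - 1)" for v :: real
  have "(G has_integral Beta \<gamma> (1 - \<beta>)) (cbox 0 1)"
    unfolding G_def using has_integral_Beta_real[of \<gamma> "1 - \<beta>"] \<gamma> \<beta> by simp
  from has_integral_affinity[OF this, of "1 / t" 0] t
  have "((\<lambda>x. G (x / t)) has_integral t * Beta \<gamma> (1 - \<beta>)) ((\<lambda>x. t * x) ` {0..1})"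
    by (simp add: field_simps)
  also have "(\<lambda>x. t * x) ` {0..1} = {0..t}" using image_mult_atLeastAtMost[of t 0 1] t by simp
  finally have "((\<lambda>x. t powr (\<gamma> - 1 - \<beta>) * G (x / t)) has_integral
      t powr (\<gamma> - 1 - \<beta>) * (t * Beta \<gamma> (1 - \<beta>))) {0..t}"
    by (rule has_integral_mult_right)
  moreover have "t powr (\<gamma> - 1 - \<beta>) * (t * Beta \<gamma> (1 - \<beta>)) = t powr (\<gamma> - \<beta>) * Beta \<gamma> (1 - \<beta>)"
    using t by (simp add: powr_diff powr_add field_simps)
  moreover have "t powr (\<gamma> - 1 - \<beta>) * G (s / t) = (t - s) powr (-\<beta>) * s powr (\<gamma> - 1)"
    if s: "s \<in> {0..t}" for s
  proof -
    have "1 - s / t = (t - s) / t" using t by (simp add: field_simps)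
    hence "G (s / t) = (s powr (\<gamma> - 1) / t powr (\<gamma> - 1)) * ((t - s) powr (-\<beta>) / t powr (-\<beta>))"
      using s t by (simp add: G_def powr_divide)
    moreover have "t powr (\<gamma> - 1 - \<beta>) = t powr (\<gamma> - 1) * t powr (-\<beta>)"
      by (simp add: powr_add[symmetric])
    ultimately show ?thesis using t by (simp add: field_simps)
  qed
  ultimately show ?thesis
    using has_integral_spike_finite[OF finite.emptyI] by (metis (no_types, lifting) Diff_empty)
qed

text \<open>The Caputo derivative of \<open>t powr \<gamma>\<close> is \<open>Gamma (\<gamma> + 1) / Gamma (\<gamma> + 1 - \<beta>) * t powr (\<gamma> - \<beta>)\<close>.\<close>
lemma has_integral_caputo_powr:
  fixes t \<gamma> \<beta> :: real
  assumes t: "0 < t" and \<gamma>: "0 < \<gamma>" and \<beta>: "0 < \<beta>" "\<beta> < 1"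
  shows "((\<lambda>s. (t - s) powr (-\<beta>) * (\<gamma> * s powr (\<gamma> - 1))) has_integral
           Gamma (1 - \<beta>) * (Gamma (\<gamma> + 1) / Gamma (\<gamma> + 1 - \<beta>) * t powr (\<gamma> - \<beta>))) {0..t}"
proof -
  have "Gamma (\<gamma> + 1) = \<gamma> * Gamma \<gamma>"
    using \<gamma> by (intro Gamma_plus1) (auto simp: nonpos_Ints_def)
  moreover have "Beta \<gamma> (1 - \<beta>) = Gamma \<gamma> * Gamma (1 - \<beta>) / Gamma (\<gamma> + 1 - \<beta>)"
    by (simp add: Beta_def add_diff_eq)
  ultimately have "\<gamma> * (t powr (\<gamma> - \<beta>) * Beta \<gamma> (1 - \<beta>))
      = Gamma (1 - \<beta>) * (Gamma (\<gamma> + 1) / Gamma (\<gamma> + 1 - \<beta>) * t powr (\<gamma> - \<beta>))"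
    by simp
  with has_integral_mult_right[OF has_integral_beta_kernel[OF assms], of \<gamma>] show ?thesis
    by (simp add: mult_ac)
qed

lemma has_integral_suminf_dominated:
  fixes f :: "nat \<Rightarrow> real \<Rightarrow> real"
  assumes f: "\<And>m. (f m has_integral v m) S" and h: "h integrable_on S"
    and dom: "\<And>N s. s \<in> S \<Longrightarrow> (\<Sum>m<N. \<bar>f m s\<bar>) \<le> h s"
  shows "v sums integral S (\<lambda>s. \<Sum>m. f m s)" "(\<lambda>s. \<Sum>m. f m s) integrable_on S"
proof -
  have sm: "summable (\<lambda>m. f m s)" if s: "s \<in> S" for s
  proof (rule summable_rabs_cancel, rule bounded_imp_summable)
    show "(\<Sum>m\<le>n. \<bar>f m s\<bar>) \<le> h s" for n
      using dom[OF s, of "Suc n"] by (simp only: lessThan_Suc_atMost)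
  qed simp
  define F where "F N s = (\<Sum>m<N. f m s)" for N s
  have F: "(F N has_integral (\<Sum>m<N. v m)) S" for N
    unfolding F_def by (intro has_integral_sum f) auto
  have Fi: "F N integrable_on S" for N using F by blast
  have Fh: "norm (F N s) \<le> h s" if "s \<in> S" for N s
    using order_trans[OF sum_abs dom[OF that, of N]] by (simp add: F_def)
  have Flim: "(\<lambda>N. F N s) \<longlonglongrightarrow> (\<Sum>m. f m s)" if "s \<in> S" for s
    unfolding F_def using sm[OF that] by (rule summable_LIMSEQ)
  note dc = dominated_convergence[OF Fi h Fh Flim]
  show "(\<lambda>s. \<Sum>m. f m s) integrable_on S" by (rule dc(1))
  have "integral S (F N) = (\<Sum>m<N. v m)" for N using F by (rule integral_unique)
  with dc(2) show "v sums integral S (\<lambda>s. \<Sum>m. f m s)" by (simp add: sums_def)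
qed

lemma Gamma_add_ge_powr_mult:
  fixes x \<beta> :: real
  assumes x: "x \<ge> 2" and b: "0 < \<beta>" "\<beta> \<le> 1"
  shows "Gamma (x + \<beta>) \<ge> (x - 1) powr \<beta> * Gamma x"
proof -
  define f :: "real \<Rightarrow> real" where "f = ln \<circ> Gamma"
  have cv: "convex_on {0<..} f" unfolding f_def by (rule log_convex_Gamma_real)
  define th where "th = 1 / (1 + \<beta>)"
  have th: "0 \<le> th" "th \<le> 1" using b by (auto simp: th_def)
  have t1: "th * (1 + \<beta>) = 1" using b by (simp add: th_def)
  have "(1 - th) * (x - 1) + th * (x + \<beta>) = x - 1 + th * (1 + \<beta>)" by (simp add: algebra_simps)
  hence comb: "(1 - th) *\<^sub>R (x - 1) + th *\<^sub>R (x + \<beta>) = x" using t1 by simp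
  have "f ((1 - th) *\<^sub>R (x - 1) + th *\<^sub>R (x + \<beta>)) \<le> (1 - th) * f (x - 1) + th * f (x + \<beta>)"
    by (rule convex_onD[OF cv th]) (use x b in auto)
  hence c1: "f x \<le> (1 - th) * f (x - 1) + th * f (x + \<beta>)" using comb by simp
  have "(1 + \<beta>) * f x \<le> \<beta> * f (x - 1) + f (x + \<beta>)"
  proof -
    have "(1 + \<beta>) * f x \<le> (1 + \<beta>) * ((1 - th) * f (x - 1) + th * f (x + \<beta>))"
      using c1 b by (intro mult_left_mono) auto
    also have "\<dots> = ((1 + \<beta>) * (1 - th)) * f (x - 1) + ((1 + \<beta>) * th) * f (x + \<beta>)"
      by (simp add: algebra_simps)
    also have "(1 + \<beta>) * (1 - th) = \<beta>" using t1 by (simp add: algebra_simps)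
    also have "(1 + \<beta>) * th = 1" using t1 by (simp add: algebra_simps)
    finally show ?thesis by simp
  qed
  moreover have g1: "Gamma (x - 1) > 0" "Gamma x > 0" "Gamma (x + \<beta>) > 0"
    using x b by (auto intro!: Gamma_real_pos)
  moreover have "Gamma x = (x - 1) * Gamma (x - 1)"
  proof -
    have "x - 1 \<notin> \<int>\<^sub>\<le>\<^sub>0" using x by (auto simp: nonpos_Ints_def)
    thus ?thesis using Gamma_plus1[of "x - 1"] by simp
  qed
  hence "f x = ln (x - 1) + f (x - 1)" using x g1(1)
    by (simp add: f_def ln_mult less_imp_neq[symmetric])
  ultimately have "f (x + \<beta>) \<ge> f x + \<beta> * ln (x - 1)" by (simp add: algebra_simps)
  hence "exp (f x + \<beta> * ln (x - 1)) \<le> exp (f (x + \<beta>))" by simp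
  thus ?thesis using g1 x by (simp add: f_def exp_add powr_def mult.commute)
qed

lemma Gamma_mult_of_nat_plus_1_pos: "0 \<le> \<beta> \<Longrightarrow> 0 < Gamma (\<beta> * real m + 1)"
  by (rule Gamma_real_pos) (simp add: add_nonneg_pos)

lemma Gamma_mult_Suc_ge:
  assumes "0 < \<beta>" "\<beta> \<le> 1" "1 \<le> \<beta> * real m"
  shows "(\<beta> * real m) powr \<beta> * Gamma (\<beta> * real m + 1) \<le> Gamma (\<beta> * real (Suc m) + 1)"
  using Gamma_add_ge_powr_mult[of "\<beta> * real m + 1" \<beta>] assms by (simp add: algebra_simps)

lemma summable_pow_div_Gamma:
  fixes \<beta> y :: real
  assumes \<beta>: "0 < \<beta>" "\<beta> \<le> 1"
  shows "summable (\<lambda>m. \<bar>y\<bar>^m / Gamma (\<beta> * real m + 1))"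
proof -
  define g where "g m = \<bar>y\<bar>^m / Gamma (\<beta> * real m + 1)" for m
  have G: "0 < Gamma (\<beta> * real m + 1)" for m using \<beta> by (intro Gamma_mult_of_nat_plus_1_pos) simp
  define M where "M = max 1 ((2 * \<bar>y\<bar> + 1) powr (1 / \<beta>))"
  define N where "N = nat \<lceil>M / \<beta>\<rceil>"
  have step: "g (Suc m) \<le> 1/2 * g m" if "N \<le> m" for m
  proof -
    have "M \<le> \<beta> * real m" using that \<beta> by (simp add: N_def field_simps)
    hence "((2 * \<bar>y\<bar> + 1) powr (1 / \<beta>)) powr \<beta> \<le> (\<beta> * real m) powr \<beta>" "1 \<le> \<beta> * real m"
      using \<beta> by (auto simp: M_def intro!: powr_mono2)
    hence "2 * \<bar>y\<bar> + 1 \<le> (\<beta> * real m) powr \<beta>" "1 \<le> \<beta> * real m" using \<beta> by (simp_all add: powr_powr)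
    hence "(2 * \<bar>y\<bar> + 1) * Gamma (\<beta> * real m + 1) \<le> Gamma (\<beta> * real (Suc m) + 1)"
      using Gamma_mult_Suc_ge[OF \<beta>] G[of m] by (meson mult_right_mono less_imp_le order_trans)
    hence "g (Suc m) \<le> \<bar>y\<bar>^Suc m / ((2 * \<bar>y\<bar> + 1) * Gamma (\<beta> * real m + 1))"
      unfolding g_def using G[of m] G[of "Suc m"] by (intro divide_left_mono) auto
    also have "\<dots> = \<bar>y\<bar> / (2 * \<bar>y\<bar> + 1) * g m" by (simp add: g_def field_simps)
    also have "\<dots> \<le> 1/2 * g m"
      using G[of m] by (intro mult_right_mono) (auto simp: g_def field_simps)
    finally show ?thesis .
  qed
  have "norm (g m) = g m" for m using G[of m] by (simp add: g_def)
  hence "summable g" using step by (intro summable_ratio_test[of "1/2" N]) auto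
  thus ?thesis by (simp add: g_def[abs_def])
qed

definition ml_series :: "real \<Rightarrow> (nat \<Rightarrow> real) \<Rightarrow> real \<Rightarrow> real" where
  "ml_series \<beta> d y = (\<Sum>m. d m / Gamma (\<beta> * real m + 1) * y ^ m)"

text \<open>The derivative in \<open>s\<close> of the \<open>(m + 1)\<close>-st term of \<open>ml_series \<beta> d (K * s powr \<beta>)\<close>.\<close>
definition ml_dterm :: "real \<Rightarrow> (nat \<Rightarrow> real) \<Rightarrow> real \<Rightarrow> nat \<Rightarrow> real \<Rightarrow> real" where
  "ml_dterm \<beta> d K m s = d (Suc m) * K ^ Suc m / Gamma (\<beta> * real (Suc m) + 1) *
     (\<beta> * real (Suc m) * s powr (\<beta> * real (Suc m) - 1))"

lemma ml_series_at_0: "ml_series \<beta> d 0 = d 0"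
  using powser_zero[of "\<lambda>m. d m / Gamma (\<beta> * real m + 1)"] by (simp add: ml_series_def)

context
  fixes \<beta> B :: real and d :: "nat \<Rightarrow> real"
  assumes \<beta>: "0 < \<beta>" "\<beta> \<le> 1" and d: "\<And>m. \<bar>d m\<bar> \<le> B"
begin

lemma ml_series_abs_summable: "summable (\<lambda>m. \<bar>d m / Gamma (\<beta> * real m + 1) * y ^ m\<bar>)"
proof (rule summable_comparison_test'[where N=0])
  show "summable (\<lambda>m. B * (\<bar>y\<bar>^m / Gamma (\<beta> * real m + 1)))"
    using summable_pow_div_Gamma[OF \<beta>] by (rule summable_mult)
  fix m
  have G: "0 < Gamma (\<beta> * real m + 1)" using \<beta> by (intro Gamma_mult_of_nat_plus_1_pos) simp
  have "\<bar>d m / Gamma (\<beta> * real m + 1) * y ^ m\<bar> = \<bar>d m\<bar> * (\<bar>y\<bar>^m / Gamma (\<beta> * real m + 1))"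
    using G by (simp add: abs_mult power_abs)
  also have "\<dots> \<le> B * (\<bar>y\<bar>^m / Gamma (\<beta> * real m + 1))"
    using d[of m] G by (intro mult_right_mono) auto
  finally show "norm \<bar>d m / Gamma (\<beta> * real m + 1) * y ^ m\<bar> \<le> B * (\<bar>y\<bar>^m / Gamma (\<beta> * real m + 1))"
    by simp
qed

lemma ml_series_diffs_abs_summable:
  "summable (\<lambda>m. \<bar>diffs (\<lambda>m. d m / Gamma (\<beta> * real m + 1)) m\<bar> * r ^ m)"
proof -
  define c where "c m = d m / Gamma (\<beta> * real m + 1)" for m
  have "summable (\<lambda>m. \<bar>c m\<bar> * r ^ m)" for r
  proof (rule summable_rabs_cancel)
    show "summable (\<lambda>m. \<bar>\<bar>c m\<bar> * r ^ m\<bar>)"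
      using ml_series_abs_summable[of r] by (simp add: c_def abs_mult)
  qed
  hence "summable (\<lambda>m. diffs (\<lambda>m. \<bar>c m\<bar>) m * r ^ m)"
    by (rule termdiff_converges_all)
  moreover have "diffs (\<lambda>m. \<bar>c m\<bar>) m = \<bar>diffs c m\<bar>" for m
    by (simp add: diffs_def abs_mult)
  ultimately show ?thesis by (simp add: c_def[abs_def])
qed

lemma ml_series_has_derivative:
  "(ml_series \<beta> d has_real_derivative
     (\<Sum>m. diffs (\<lambda>m. d m / Gamma (\<beta> * real m + 1)) m * y ^ m)) (at y)"
proof -
  have "summable (\<lambda>m. d m / Gamma (\<beta> * real m + 1) * y ^ m)" for y
    using ml_series_abs_summable[of y] by (rule summable_rabs_cancel)
  thus ?thesis unfolding ml_series_def[abs_def] by (rule termdiffs_strong_converges_everywhere)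
qed

lemma ml_series_continuous: "continuous_on A (ml_series \<beta> d)"
  by (intro continuous_at_imp_continuous_on ballI DERIV_isCont[OF ml_series_has_derivative])

lemma ml_series_powr_continuous: "continuous_on {0..} (\<lambda>s. ml_series \<beta> d (K * s powr \<beta>))"
proof -
  have "continuous_on {0..} (\<lambda>s. K * s powr \<beta>)"
    using \<beta> by (intro continuous_intros continuous_on_powr') auto
  thus ?thesis by (rule continuous_on_compose2[OF ml_series_continuous]) auto
qed

lemma ml_dterm_eq_diffs:
  assumes "0 < s"
  shows "ml_dterm \<beta> d K m s =
    diffs (\<lambda>m. d m / Gamma (\<beta> * real m + 1)) m * (K * s powr \<beta>) ^ m * (K * (\<beta> * s powr (\<beta> - 1)))"
proof -
  have "s powr (\<beta> * real (Suc m) - 1) = s powr (\<beta> * real m) * s powr (\<beta> - 1)"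
    by (simp add: powr_add[symmetric] algebra_simps)
  also have "s powr (\<beta> * real m) = (s powr \<beta>) ^ m" by (rule powr_mult_of_nat[OF assms])
  finally have "s powr (\<beta> * real (Suc m) - 1) = (s powr \<beta>) ^ m * s powr (\<beta> - 1)" .
  thus ?thesis
    unfolding ml_dterm_def diffs_def power_mult_distrib power_Suc by (simp add: ac_simps)
qed

lemma ml_series_powr_has_derivative:
  assumes "0 < s"
  shows "((\<lambda>s. ml_series \<beta> d (K * s powr \<beta>)) has_real_derivative (\<Sum>m. ml_dterm \<beta> d K m s)) (at s)"
    and "summable (\<lambda>m. ml_dterm \<beta> d K m s)"
proof -
  let ?c = "\<lambda>m. d m / Gamma (\<beta> * real m + 1)"
  let ?D = "K * (\<beta> * s powr (\<beta> - 1))"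
  have "((\<lambda>s. K * s powr \<beta>) has_real_derivative ?D) (at s)"
    using assms by (intro derivative_eq_intros) auto
  note chain = DERIV_chain2[OF ml_series_has_derivative this]
  have S: "summable (\<lambda>m. diffs ?c m * (K * s powr \<beta>) ^ m)"
    by (rule summable_rabs_cancel)
       (use ml_series_diffs_abs_summable[of "\<bar>K * s powr \<beta>\<bar>"] in \<open>simp add: abs_mult power_abs\<close>)
  have eq: "(\<lambda>m. ml_dterm \<beta> d K m s) = (\<lambda>m. diffs ?c m * (K * s powr \<beta>) ^ m * ?D)"
    by (rule ext) (rule ml_dterm_eq_diffs[OF assms])
  show "summable (\<lambda>m. ml_dterm \<beta> d K m s)"
    unfolding eq by (rule summable_mult2[OF S])
  show "((\<lambda>s. ml_series \<beta> d (K * s powr \<beta>)) has_real_derivative (\<Sum>m. ml_dterm \<beta> d K m s)) (at s)"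
    unfolding eq suminf_mult2[OF S, symmetric] by (rule chain)
qed

end

lemma ml_dterm_caputo_integral:
  assumes \<beta>: "0 < \<beta>" "\<beta> < 1" and t: "0 < t"
  shows "((\<lambda>s. (t - s) powr (-\<beta>) * ml_dterm \<beta> d K m s) has_integral
           Gamma (1 - \<beta>) * (K * (d (Suc m) / Gamma (\<beta> * real m + 1) * (K * t powr \<beta>) ^ m))) {0..t}"
proof -
  define \<gamma> where "\<gamma> = \<beta> * real (Suc m)"
  define c where "c = d (Suc m) * K ^ Suc m / Gamma (\<gamma> + 1)"
  have "0 < \<gamma>" using \<beta> by (simp add: \<gamma>_def)
  have G: "0 < Gamma (\<gamma> + 1)"
    unfolding \<gamma>_def using \<beta> by (intro Gamma_mult_of_nat_plus_1_pos) simp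
  have "\<gamma> + 1 - \<beta> = \<beta> * real m + 1" "t powr (\<gamma> - \<beta>) = (t powr \<beta>) ^ m"
    using powr_mult_of_nat[OF t, of \<beta> m] by (simp_all add: \<gamma>_def algebra_simps)
  with has_integral_mult_right[OF has_integral_caputo_powr[OF t \<open>0 < \<gamma>\<close> \<beta>], of c]
  have I: "((\<lambda>s. c * ((t - s) powr (-\<beta>) * (\<gamma> * s powr (\<gamma> - 1)))) has_integral
      c * (Gamma (1 - \<beta>) * (Gamma (\<gamma> + 1) / Gamma (\<beta> * real m + 1) * (t powr \<beta>) ^ m))) {0..t}"
    by simp
  have V: "c * (Gamma (1 - \<beta>) * (Gamma (\<gamma> + 1) / Gamma (\<beta> * real m + 1) * (t powr \<beta>) ^ m))
      = Gamma (1 - \<beta>) * (K * (d (Suc m) / Gamma (\<beta> * real m + 1) * (K * t powr \<beta>) ^ m))"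
    using G by (simp add: c_def power_mult_distrib)
  have E: "c * ((t - s) powr (-\<beta>) * (\<gamma> * s powr (\<gamma> - 1))) = (t - s) powr (-\<beta>) * ml_dterm \<beta> d K m s" for s
    unfolding c_def ml_dterm_def \<gamma>_def[symmetric] by (simp add: mult_ac)
  show ?thesis using I unfolding V E .
qed

lemma ml_dterm_dominated:
  assumes \<beta>: "0 < \<beta>" "\<beta> \<le> 1" and d: "\<And>m. \<bar>d m\<bar> \<le> B"
  obtains a where "summable a" "\<And>m. 0 \<le> a m"
    and "\<And>m s. 0 \<le> s \<Longrightarrow> s \<le> t \<Longrightarrow> \<bar>ml_dterm \<beta> d K m s\<bar> \<le> s powr (\<beta> - 1) * a m"
proof
  let ?c = "\<lambda>m. d m / Gamma (\<beta> * real m + 1)"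
  show "summable (\<lambda>m. \<bar>K\<bar> * \<beta> * (\<bar>diffs ?c m\<bar> * (\<bar>K\<bar> * t powr \<beta>) ^ m))"
    by (rule summable_mult, rule ml_series_diffs_abs_summable[where d=d, OF \<beta> d])
  show "0 \<le> \<bar>K\<bar> * \<beta> * (\<bar>diffs ?c m\<bar> * (\<bar>K\<bar> * t powr \<beta>) ^ m)" for m
    using \<beta> by simp
  fix m s assume s: "0 \<le> s" "s \<le> t"
  show "\<bar>ml_dterm \<beta> d K m s\<bar> \<le> s powr (\<beta> - 1) * (\<bar>K\<bar> * \<beta> * (\<bar>diffs ?c m\<bar> * (\<bar>K\<bar> * t powr \<beta>) ^ m))"
  proof (cases "s = 0")
    case True thus ?thesis using \<beta> by (simp add: ml_dterm_def)
  next
    case False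
    hence "0 < s" using s by simp
    moreover have "(s powr \<beta>) ^ m \<le> (t powr \<beta>) ^ m"
      using s \<beta> by (intro power_mono powr_mono2) auto
    ultimately show ?thesis
      using \<beta> unfolding ml_dterm_eq_diffs[OF \<beta> d \<open>0 < s\<close>]
      by (simp add: abs_mult power_abs power_mult_distrib mult_left_mono mult_right_mono mult_ac)
  qed
qed

text \<open>Termwise integration against the Abel kernel, dominated by a multiple of \<open>(t - s) powr (-\<beta>) * s powr (\<beta> - 1)\<close>.\<close>
lemma has_integral_caputo_ml_series:
  assumes \<beta>: "0 < \<beta>" "\<beta> < 1" and d: "\<And>m. \<bar>d m\<bar> \<le> B" and t: "0 < t"
  shows "((\<lambda>s. (t - s) powr (-\<beta>) * deriv (\<lambda>s. ml_series \<beta> d (K * s powr \<beta>)) s) has_integral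
           Gamma (1 - \<beta>) * (K * ml_series \<beta> (\<lambda>m. d (Suc m)) (K * t powr \<beta>))) {0..t}"
proof -
  have \<beta>1: "\<beta> \<le> 1" using \<beta> by simp
  obtain a where a: "summable a" and a0: "\<And>m. 0 \<le> a m"
    and bound: "\<And>m s. 0 \<le> s \<Longrightarrow> s \<le> t \<Longrightarrow> \<bar>ml_dterm \<beta> d K m s\<bar> \<le> s powr (\<beta> - 1) * a m"
    using ml_dterm_dominated[where d=d and K=K and t=t, OF \<beta>(1) \<beta>1 d] by blast
  define T where "T m s = (t - s) powr (-\<beta>) * ml_dterm \<beta> d K m s" for m s
  define v where "v m = Gamma (1 - \<beta>) * (K * (d (Suc m) / Gamma (\<beta> * real m + 1) * (K * t powr \<beta>) ^ m))" for m
  define h where "h s = (t - s) powr (-\<beta>) * s powr (\<beta> - 1) * (\<Sum>m. a m)" for s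
  have T: "(T m has_integral v m) {0..t}" for m
    unfolding T_def v_def by (rule ml_dterm_caputo_integral[OF \<beta> t])
  have h: "h integrable_on {0..t}"
    unfolding h_def using has_integral_beta_kernel[OF t \<beta>(1) \<beta>] by (intro integrable_on_mult_left) blast
  have dom: "(\<Sum>m<N. \<bar>T m s\<bar>) \<le> h s" if s: "s \<in> {0..t}" for N s
  proof -
    have "(\<Sum>m<N. \<bar>T m s\<bar>) \<le> (\<Sum>m<N. (t - s) powr (-\<beta>) * s powr (\<beta> - 1) * a m)"
    proof (intro sum_mono)
      fix m
      have "(t - s) powr (-\<beta>) * \<bar>ml_dterm \<beta> d K m s\<bar> \<le> (t - s) powr (-\<beta>) * (s powr (\<beta> - 1) * a m)"
        using bound[of s m] s by (intro mult_left_mono) auto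
      thus "\<bar>T m s\<bar> \<le> (t - s) powr (-\<beta>) * s powr (\<beta> - 1) * a m"
        by (simp add: T_def abs_mult mult.assoc)
    qed
    also have "\<dots> \<le> h s"
      unfolding h_def sum_distrib_left[symmetric] using a0 by (intro mult_left_mono sum_le_suminf[OF a]) auto
    finally show ?thesis .
  qed
  have "summable (\<lambda>m. d (Suc m) / Gamma (\<beta> * real m + 1) * (K * t powr \<beta>) ^ m)"
    by (rule summable_rabs_cancel, rule ml_series_abs_summable[where d="\<lambda>m. d (Suc m)", OF \<beta>(1) \<beta>1 d])
  hence "v sums (Gamma (1 - \<beta>) * (K * ml_series \<beta> (\<lambda>m. d (Suc m)) (K * t powr \<beta>)))"
    unfolding v_def ml_series_def by (intro sums_mult summable_sums)
  hence "integral {0..t} (\<lambda>s. \<Sum>m. T m s) = Gamma (1 - \<beta>) * (K * ml_series \<beta> (\<lambda>m. d (Suc m)) (K * t powr \<beta>))"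
    using has_integral_suminf_dominated(1)[OF T h dom] by (rule sums_unique2[rotated])
  hence I: "((\<lambda>s. \<Sum>m. T m s) has_integral
      Gamma (1 - \<beta>) * (K * ml_series \<beta> (\<lambda>m. d (Suc m)) (K * t powr \<beta>))) {0..t}"
    using integrable_integral[OF has_integral_suminf_dominated(2)[OF T h dom]] by (simp only:)
  have E: "(t - s) powr (-\<beta>) * deriv (\<lambda>s. ml_series \<beta> d (K * s powr \<beta>)) s = (\<Sum>m. T m s)"
    if "s \<in> {0..t} - {0}" for s
  proof -
    have "0 < s" using that by auto
    note D = ml_series_powr_has_derivative[where d=d and K=K, OF \<beta>(1) \<beta>1 d this]
    show ?thesis
      unfolding DERIV_imp_deriv[OF D(1)] T_def by (rule suminf_mult[OF D(2), symmetric])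
  qed
  show ?thesis by (rule has_integral_spike_finite[where S="{0}", OF _ E I]) auto
qed

lemma ml_dterm_1:
  assumes "0 < t"
  shows "ml_dterm 1 d K m t = K * (d (Suc m) / Gamma (1 * real m + 1) * (K * t powr 1) ^ m)"
proof -
  have "Gamma (real m + 1 + 1) = (real m + 1) * Gamma (real m + 1)"
    by (rule Gamma_plus1) (auto simp: nonpos_Ints_def)
  moreover have "t powr real m = t ^ m" using assms by (rule powr_realpow)
  ultimately show ?thesis
    using assms by (simp add: ml_dterm_def add_ac power_mult_distrib)
qed

lemma has_caputo_deriv_ml_series:
  assumes \<beta>: "0 < \<beta>" "\<beta> \<le> 1" and d: "\<And>m. \<bar>d m\<bar> \<le> B" and t: "0 < t"
  shows "has_caputo_deriv \<beta> (\<lambda>s. ml_series \<beta> d (K * s powr \<beta>))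
           (K * ml_series \<beta> (\<lambda>m. d (Suc m)) (K * t powr \<beta>)) t"
proof (cases "\<beta> = 1")
  case True
  have "summable (\<lambda>m. d (Suc m) / Gamma (\<beta> * real m + 1) * (K * t powr \<beta>) ^ m)"
    by (rule summable_rabs_cancel, rule ml_series_abs_summable[where d="\<lambda>m. d (Suc m)", OF \<beta> d])
  hence "(\<Sum>m. ml_dterm \<beta> d K m t) = K * ml_series \<beta> (\<lambda>m. d (Suc m)) (K * t powr \<beta>)"
    unfolding ml_series_def True ml_dterm_1[OF t] by (rule suminf_mult)
  thus ?thesis
    using ml_series_powr_has_derivative(1)[where d=d and K=K, OF \<beta> d t] True
    by (simp add: has_caputo_deriv_def)
next
  case False
  hence \<beta>1: "\<beta> < 1" using \<beta> by simp
  let ?f = "\<lambda>s. ml_series \<beta> d (K * s powr \<beta>)"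
  have "continuous_on {0..t} ?f"
    by (rule continuous_on_subset[OF ml_series_powr_continuous[OF \<beta> d]]) auto
  moreover have "?f differentiable (at s)" if "s \<in> {0<..<t}" for s
    using ml_series_powr_has_derivative(1)[where d=d and K=K, OF \<beta> d] that
    by (auto simp: real_differentiable_def)
  moreover note I = has_integral_caputo_ml_series[where d=d and K=K, OF \<beta>(1) \<beta>1 d t]
  moreover have "0 < Gamma (1 - \<beta>)" using \<beta>1 by (intro Gamma_real_pos) simp
  ultimately show ?thesis
    using False integral_unique[OF I] has_integral_integrable[OF I]
    by (simp add: has_caputo_deriv_def)
qed

context Ecoef_params
begin

lemma pterm_eq:
  "pterm \<alpha> \<mu> \<beta> \<xi> lam n t = (\<lambda>m. E m n / Gamma (\<beta> * real m + 1) * (-((lam + 1) powr \<mu>) * \<xi> * t powr \<beta>) ^ m)"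
  by (simp add: pterm_def fun_eq_iff)

lemma psol_eq: "psol \<alpha> \<mu> \<beta> \<xi> lam n = (\<lambda>t. ml_series \<beta> (\<lambda>m. E m n) (-((lam + 1) powr \<mu>) * \<xi> * t powr \<beta>))"
  by (simp add: psol_def pterm_eq ml_series_def fun_eq_iff)

lemma ml_series_E_Suc:
  assumes "0 < \<beta>" "\<beta> \<le> 1"
  shows "ml_series \<beta> (\<lambda>m. E (Suc m) n) y = (\<Sum>j\<le>n. ccoef \<alpha> \<mu> lam (n - j) * ml_series \<beta> (\<lambda>m. E m j) y)"
proof -
  have S: "summable (\<lambda>m. E m j / Gamma (\<beta> * real m + 1) * y ^ m)" for j
    by (rule summable_rabs_cancel, rule ml_series_abs_summable[OF assms abs_E_le_1])
  have "ml_series \<beta> (\<lambda>m. E (Suc m) n) y =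
      (\<Sum>m. \<Sum>j\<le>n. ccoef \<alpha> \<mu> lam (n - j) * (E m j / Gamma (\<beta> * real m + 1) * y ^ m))"
    unfolding ml_series_def E_Suc
    by (simp add: sum_distrib_left sum_distrib_right sum_divide_distrib mult_ac)
  also have "\<dots> = (\<Sum>j\<le>n. \<Sum>m. ccoef \<alpha> \<mu> lam (n - j) * (E m j / Gamma (\<beta> * real m + 1) * y ^ m))"
    by (rule suminf_sum) (intro summable_mult S)
  also have "\<dots> = (\<Sum>j\<le>n. ccoef \<alpha> \<mu> lam (n - j) * ml_series \<beta> (\<lambda>m. E m j) y)"
    unfolding ml_series_def by (intro sum.cong refl suminf_mult S)
  finally show ?thesis .
qed

lemma ml_series_E_generating:
  assumes \<beta>: "0 < \<beta>" "\<beta> \<le> 1" and u: "\<bar>u\<bar> < 1"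
  shows "(\<lambda>n. ml_series \<beta> (\<lambda>m. E m n) y * u ^ n) sums mittag_leffler \<beta> (y * gbase \<alpha> lam u powr \<mu>)"
proof -
  define Q where "Q m = y ^ m / Gamma (\<beta> * real m + 1)" for m
  define A where "A m n = E m n * u^n * Q m" for m n
  have "\<bar>A m n\<bar> \<le> \<bar>u\<bar>^n * \<bar>Q m\<bar>" for m n
  proof -
    have "\<bar>A m n\<bar> = \<bar>E m n\<bar> * (\<bar>u\<bar>^n * \<bar>Q m\<bar>)" by (simp add: A_def abs_mult power_abs)
    also have "\<dots> \<le> 1 * (\<bar>u\<bar>^n * \<bar>Q m\<bar>)" by (intro mult_right_mono abs_E_le_1) simp
    finally show ?thesis by simp
  qed
  moreover have "(\<lambda>n. \<bar>u\<bar>^n * \<bar>Q m\<bar>) sums (1 / (1 - \<bar>u\<bar>) * \<bar>Q m\<bar>)" for m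
    using geometric_sums[of "\<bar>u\<bar>"] u by (intro sums_mult2) simp
  moreover have "summable (\<lambda>m. 1 / (1 - \<bar>u\<bar>) * \<bar>Q m\<bar>)"
  proof (intro summable_mult)
    have "\<bar>Q m\<bar> = \<bar>y\<bar> ^ m / Gamma (\<beta> * real m + 1)" for m
      using Gamma_mult_of_nat_plus_1_pos[of \<beta> m] \<beta> by (simp add: Q_def abs_mult power_abs)
    thus "summable (\<lambda>m. \<bar>Q m\<bar>)" using summable_pow_div_Gamma[OF \<beta>, of y] by simp
  qed
  moreover have "(\<lambda>n. A m n) sums (gbase \<alpha> lam u powr (real m * \<mu>) * Q m)" for m
    unfolding A_def by (rule sums_mult2, rule E_sums[OF u])
  ultimately have "(\<lambda>n. \<Sum>m. A m n) sums (\<Sum>m. gbase \<alpha> lam u powr (real m * \<mu>) * Q m)"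
    by (rule sums_swap_dominated(1))
  moreover have "(\<Sum>m. A m n) = ml_series \<beta> (\<lambda>m. E m n) y * u ^ n" for n
  proof -
    have S: "summable (\<lambda>m. E m n / Gamma (\<beta> * real m + 1) * y ^ m)"
      by (rule summable_rabs_cancel, rule ml_series_abs_summable[where d="\<lambda>m. E m n", OF \<beta> abs_E_le_1])
    have "(\<lambda>m. A m n) = (\<lambda>m. E m n / Gamma (\<beta> * real m + 1) * y ^ m * u ^ n)"
      by (simp add: A_def Q_def fun_eq_iff)
    thus ?thesis unfolding ml_series_def by (simp only: suminf_mult2[OF S])
  qed
  moreover have "gbase \<alpha> lam u powr (real m * \<mu>) * Q m = (y * gbase \<alpha> lam u powr \<mu>) ^ m / Gamma (\<beta> * real m + 1)" for m
    using powr_mult_of_nat[OF gbase_pos[OF lam(1) u, of \<alpha>], of \<mu> m]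
    by (simp add: Q_def power_mult_distrib mult_ac)
  ultimately show ?thesis by (simp add: mittag_leffler_def)
qed

end

theorem mainTheorem17:
  fixes \<alpha> \<mu> \<beta> \<xi> lam :: real
  assumes "0 < \<alpha>" "\<alpha> \<le> 1" "0 < \<mu>" "\<mu> \<le> 1" "0 < \<beta>" "\<beta> \<le> 1"
    and "0 < \<xi>" and "0 < lam" and "lam \<noteq> 1"
  shows
    \<comment> \<open>absolute convergence of the inner series\<close>
    "(\<forall>m n. if lam < 1 then summable (\<lambda>s. \<bar>Eterm_small \<alpha> (real m * \<mu>) lam n s\<bar>)
                     else summable (\<lambda>s. \<bar>Eterm_large \<alpha> (real m * \<mu>) lam n s\<bar>))
   \<and> (\<forall>n. \<forall>t\<ge>0. summable (pterm \<alpha> \<mu> \<beta> \<xi> lam n t))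
   \<comment> \<open>the series defines a solution of the Cauchy problem\<close>
   \<and> (\<forall>n. continuous_on {0..} (psol \<alpha> \<mu> \<beta> \<xi> lam n))
   \<and> (\<forall>n. psol \<alpha> \<mu> \<beta> \<xi> lam n 0 = (if n = 0 then 1 else 0))
   \<and> (\<forall>n. \<forall>t>0. has_caputo_deriv \<beta> (psol \<alpha> \<mu> \<beta> \<xi> lam n)
          (- \<xi> * (lam + 1) powr \<mu> * (\<Sum>m\<le>n. ccoef \<alpha> \<mu> lam (n - m) * psol \<alpha> \<mu> \<beta> \<xi> lam m t)) t)
   \<comment> \<open>generating function\<close>
   \<and> (\<forall>t\<ge>0. \<forall>u. \<bar>u\<bar> < 1 \<longrightarrow>
        (\<lambda>n. psol \<alpha> \<mu> \<beta> \<xi> lam n t * u ^ n) sums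
          mittag_leffler \<beta> (- \<xi> * t powr \<beta> * (lam + 1) powr \<mu> * (1 - u) powr (\<alpha> * \<mu>)
                             / (lam + (1 - u) powr \<alpha>) powr \<mu>))"
proof -
  interpret Ecoef_params \<alpha> \<mu> lam using assms by unfold_locales auto
  have \<beta>: "0 < \<beta>" "\<beta> \<le> 1" using assms by auto
  define K where "K = -((lam + 1) powr \<mu>) * \<xi>"
  have p: "psol \<alpha> \<mu> \<beta> \<xi> lam n = (\<lambda>t. ml_series \<beta> (\<lambda>m. E m n) (K * t powr \<beta>))" for n
    by (simp add: psol_eq K_def)
  note ml_lemmas = ml_series_abs_summable ml_series_powr_continuous has_caputo_deriv_ml_series
  note ml_E = ml_lemmas[where d="\<lambda>m. E m n" for n, OF \<beta> abs_E_le_1]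
  have "summable (pterm \<alpha> \<mu> \<beta> \<xi> lam n t)" for n t
    unfolding pterm_eq by (rule summable_rabs_cancel, rule ml_E(1))
  moreover have "has_caputo_deriv \<beta> (psol \<alpha> \<mu> \<beta> \<xi> lam n)
      (- \<xi> * (lam + 1) powr \<mu> * (\<Sum>m\<le>n. ccoef \<alpha> \<mu> lam (n - m) * psol \<alpha> \<mu> \<beta> \<xi> lam m t)) t"
    if "0 < t" for n t
    using ml_E(3)[OF that, of n K] unfolding p ml_series_E_Suc[OF \<beta>] by (simp add: K_def mult_ac)
  moreover have "(\<lambda>n. psol \<alpha> \<mu> \<beta> \<xi> lam n t * u ^ n) sums
      mittag_leffler \<beta> (- \<xi> * t powr \<beta> * (lam + 1) powr \<mu> * (1 - u) powr (\<alpha> * \<mu>)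
                             / (lam + (1 - u) powr \<alpha>) powr \<mu>)" if "\<bar>u\<bar> < 1" for t u
    using ml_series_E_generating[OF \<beta> that, of "K * t powr \<beta>"] gbase_powr_eq_div[OF lam(1) that]
    by (simp add: p K_def mult_ac)
  ultimately show ?thesis
    using Eterm_abs_summable ml_E(2) assms(5) E_0 by (auto simp: p ml_series_at_0)
qed

end
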